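(* Let $\mu<0$. There exist constants $C_1,C_2>0$ such that for $\nu^{(\mu)}$-almost every tree $T$ there is $r_0(T)\in\mathbb N$ with $$1\le|D_r(T)|\le C_1\ln r\quad\text{and}\quad r\le|B_r(T)|\le C_2\,r\ln r\qquad\text{for all }r\ge r_0(T).$$
   Context: Rooted planar trees; $|D_r(T)|$ = number of vertices at height $r$; $|B_r(T)|=\sum_{s=1}^r|D_s(T)|$. With $k=e^{-\mu}$, $g_c=k/(1+k)^2$, $X(g)=(1-\sqrt{1-4g})/2$, $\nu^{(\mu)}$ is the Borel probability measure on the space of rooted planar trees (weak limit of $\nu_N^{(\mu)}(T)=e^{-\mu h(T)}/Z_N^{(\mu)}$ on trees with $N$ edges) characterized by $\nu^{(\mu)}(\{T:B_r(T)=T_0\})=K k^{r-1}g_c^{|T_0|-K}X(g_c)^{K-1}$ for each finite $T_0$ of height $r$ with $K$ vertices at height $r$ and $|T_0|$ edges. *)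

theory Defs
  imports "HOL-Probability.Probability"
begin

text \<open>Rooted planar trees (possibly infinite) in Ulam--Harris encoding: a vertex is a
  word of natural numbers, the root is the empty word, the children of w are w@[0], w@[1], ... Following the paper's conventions
  (planted trees), the root has exactly one child, namely [0].\<close>

definition rooted_planar_tree :: "nat list set \<Rightarrow> bool" where
  "rooted_planar_tree T \<longleftrightarrow>
     [] \<in> T \<and>
     (\<forall>w\<in>T. w \<noteq> [] \<longrightarrow> butlast w \<in> T) \<and>
     (\<forall>w i. w @ [Suc i] \<in> T \<longrightarrow> w @ [i] \<in> T) \<and>
     [0] \<in> T \<and> [1] \<notin> T"

definition D :: "nat \<Rightarrow> nat list set \<Rightarrow> nat list set" where
  "D r T = {w \<in> T. length w = r}"

definition ball_tree :: "nat \<Rightarrow> nat list set \<Rightarrow> nat list set" where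
  "ball_tree r T = {w \<in> T. length w \<le> r}"

definition Bsize :: "nat \<Rightarrow> nat list set \<Rightarrow> nat" where
  "Bsize r T = (\<Sum>s=1..r. card (D s T))"

definition finite_tree_of_height :: "nat \<Rightarrow> nat list set \<Rightarrow> bool" where
  "finite_tree_of_height r T0 \<longleftrightarrow> rooted_planar_tree T0 \<and> finite T0 \<and>
     ball_tree r T0 = T0 \<and> D r T0 \<noteq> {}"

definition n_edges :: "nat list set \<Rightarrow> nat" where
  "n_edges T0 = card T0 - 1"

definition kpar :: "real \<Rightarrow> real" where
  "kpar \<mu> = exp (- \<mu>)"

definition gcrit :: "real \<Rightarrow> real" where
  "gcrit \<mu> = kpar \<mu> / (1 + kpar \<mu>)^2"

definition Xfun :: "real \<Rightarrow> real" where
  "Xfun g = (1 - sqrt (1 - 4 * g)) / 2"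

text \<open>M is the measure nu^(mu): a probability measure on the space of rooted planar trees
  whose cylinder sets {T. B_r(T) = T0} are measurable with the prescribed probabilities
  (this characterizes nu^(mu) on the sigma-algebra generated by the cylinders).\<close>
definition is_nu_measure :: "real \<Rightarrow> nat list set measure \<Rightarrow> bool" where
  "is_nu_measure \<mu> M \<longleftrightarrow>
     prob_space M \<and> space M = {T. rooted_planar_tree T} \<and>
     (\<forall>r T0. finite_tree_of_height r T0 \<longrightarrow>
        (let K = card (D r T0); cyl = {T \<in> space M. ball_tree r T = T0} in
          cyl \<in> sets M \<and>
          measure M cyl = real K * kpar \<mu> ^ (r - 1) * gcrit \<mu> ^ (n_edges T0 - K)
                            * Xfun (gcrit \<mu>) ^ (K - 1)))"

end

theory Submission
  imports Defs
begin

text \<open>Let X = X(g_c), so 0 < X < 1/2. Under \<open>\<nu>\<close>, given the ball of radius r, the |D_r| top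
  vertices have independent geometric offspring numbers. Hence the generating function
  \<open>W_r(s) = E s^|D_r|\<close> satisfies \<open>W_{r+1}(s) = E[s ((1 - X)/(1 - X s))^(|D_r| + 1)]\<close>.
  At s = 1 this gives \<open>W_r(1) = 1\<close>: almost surely every ball is a finite tree of full height.
  At \<open>\<lambda> = 1/(2X) > 1\<close> the factor is \<open>\<lambda> (2(1 - X))^(K+1)\<close> with K = |D_r|, which is at most
  \<open>\<lambda>^K/2 + b\<close> because \<open>4X(1 - X) < 1\<close>; so \<open>W_r(\<lambda>)\<close> stays bounded. Markov's inequality gives
  \<open>P(|D_r| \<ge> 2 ln r / ln \<lambda>) = O(r^-2)\<close>, and Borel--Cantelli yields the logarithmic bound on
  |D_r| for all large r; the bounds on |B_r| follow by summation.\<close>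

lemma rooted_planar_tree_left_sibling:
  assumes "rooted_planar_tree T" "w @ [i] \<in> T" "j \<le> i"
  shows "w @ [j] \<in> T"
  using assms(2,3)
proof (induction i)
  case (Suc i)
  then show ?case
    using assms(1) unfolding rooted_planar_tree_def by (cases "j = Suc i") auto
qed simp

lemma down_closed_finite_nat_eq_lessThan:
  assumes "finite (S :: nat set)" "\<And>i j. i \<in> S \<Longrightarrow> j \<le> i \<Longrightarrow> j \<in> S"
  shows "S = {..<card S}"
proof -
  obtain n where "n \<notin> S" using assms(1) by (meson ex_new_if_finite infinite_UNIV_nat)
  define m where "m = (LEAST n. n \<notin> S)"
  have "m \<notin> S" unfolding m_def by (rule LeastI) fact
  moreover have "j < m \<Longrightarrow> j \<in> S" for j unfolding m_def using not_less_Least by blast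
  ultimately have "S = {..<m}" using assms(2) by (metis lessThan_iff not_le subsetI subset_antisym)
  then show ?thesis by simp
qed

lemma child_iff_less_card_children:
  assumes "rooted_planar_tree T" "finite T"
  shows "w @ [j] \<in> T \<longleftrightarrow> j < card {j. w @ [j] \<in> T}"
proof -
  let ?S = "{j. w @ [j] \<in> T}"
  have "finite ?S"
    using finite_vimageI[OF assms(2), of "\<lambda>j. w @ [j]"] by (simp add: vimage_def inj_on_def)
  then have "?S = {..<card ?S}"
    by (rule down_closed_finite_nat_eq_lessThan)
       (use rooted_planar_tree_left_sibling[OF assms(1)] in blast)
  then have "w @ [j] \<in> T \<longleftrightarrow> j \<in> {..<card ?S}" by blast
  then show ?thesis unfolding lessThan_iff .
qed

definition trees_of_height :: "nat \<Rightarrow> nat list set set" where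
  "trees_of_height r = {T0. finite_tree_of_height r T0}"

lemma trees_of_heightD:
  assumes "T0 \<in> trees_of_height r"
  shows "rooted_planar_tree T0" "finite T0" "\<And>v. v \<in> T0 \<Longrightarrow> length v \<le> r"
    "D r T0 \<noteq> {}" "r \<ge> 1" "finite (D r T0)"
proof -
  have T0: "rooted_planar_tree T0" "finite T0" "D r T0 \<noteq> {}" "ball_tree r T0 = T0"
    using assms by (auto simp: trees_of_height_def finite_tree_of_height_def)
  show "rooted_planar_tree T0" "finite T0" "D r T0 \<noteq> {}" using T0 by simp_all
  show len: "length v \<le> r" if "v \<in> T0" for v
    using that T0(4) by (auto simp: ball_tree_def)
  show "r \<ge> 1" using len[of "[0]"] T0(1) by (simp add: rooted_planar_tree_def)
  show "finite (D r T0)" using T0(2) by (simp add: D_def)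
qed

lemma countable_trees_of_height: "countable (trees_of_height r)"
  by (rule countable_subset[OF _ countable_Collect_finite])
     (auto simp: trees_of_height_def finite_tree_of_height_def)

lemma trees_of_height_1: "trees_of_height 1 = {{[], [0]}}"
proof (intro equalityI subsetI)
  fix T0 assume T0: "T0 \<in> trees_of_height 1"
  note F = trees_of_heightD[OF T0]
  have "v \<in> {[], [0]}" if v: "v \<in> T0" for v
  proof -
    consider "v = []" | i where "v = [i]" using F(3)[OF v] by (cases v) auto
    then show ?thesis
    proof cases
      case (2 i)
      have "[] @ [1] \<notin> T0" using F(1) by (simp add: rooted_planar_tree_def)
      then have "i = 0"
        using rooted_planar_tree_left_sibling[OF F(1), of "[]" i 1] v 2 by (cases i) auto
      then show ?thesis using 2 by simp
    qed simp
  qed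
  moreover have "{[], [0]} \<subseteq> T0" using F(1) by (simp add: rooted_planar_tree_def)
  ultimately show "T0 \<in> {{[], [0]}}" by blast
next
  fix T0 assume "T0 \<in> {{[], [0::nat]}}"
  then show "T0 \<in> trees_of_height 1"
    by (auto simp: trees_of_height_def finite_tree_of_height_def rooted_planar_tree_def
                   ball_tree_def D_def)
qed

lemma card_D_trees_of_height:
  assumes "T0 \<in> trees_of_height r"
  shows "1 \<le> card (D r T0)" "card (D r T0) \<le> n_edges T0"
proof -
  note F = trees_of_heightD[OF assms]
  show "1 \<le> card (D r T0)" using F(4,6) by (simp add: Suc_le_eq card_gt_0_iff)
  have "D r T0 \<subseteq> T0 - {[]}" using F(5) by (auto simp: D_def)
  then have "card (D r T0) \<le> card (T0 - {[]})" using F(2) by (intro card_mono) auto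
  also have "\<dots> = n_edges T0" using F(1) by (simp add: n_edges_def rooted_planar_tree_def)
  finally show "card (D r T0) \<le> n_edges T0" .
qed

lemma ball_tree_in_trees_of_height:
  assumes T1: "T1 \<in> trees_of_height (Suc r)" and r: "r \<ge> 1"
  shows "ball_tree r T1 \<in> trees_of_height r"
proof -
  note G = trees_of_heightD[OF T1]
  obtain v where v: "v \<in> T1" "length v = Suc r" using G(4) by (auto simp: D_def)
  then have "butlast v \<in> D r (ball_tree r T1)"
    using G(1) by (auto simp: rooted_planar_tree_def D_def ball_tree_def)
  moreover have "rooted_planar_tree (ball_tree r T1)"
    using G(1) r by (auto simp: rooted_planar_tree_def ball_tree_def)
  ultimately show ?thesis
    using G(2) by (auto simp: trees_of_height_def finite_tree_of_height_def ball_tree_def)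
qed

definition new_generation :: "nat \<Rightarrow> nat list set \<Rightarrow> (nat list \<Rightarrow> nat) \<Rightarrow> nat list set" where
  "new_generation r T0 c = {w @ [j] | w j. w \<in> D r T0 \<and> j < c w}"

definition graft :: "nat \<Rightarrow> nat list set \<Rightarrow> (nat list \<Rightarrow> nat) \<Rightarrow> nat list set" where
  "graft r T0 c = T0 \<union> new_generation r T0 c"

definition supported_on :: "'a set \<Rightarrow> ('a \<Rightarrow> nat) set" where
  "supported_on A = {c. \<forall>x. x \<notin> A \<longrightarrow> c x = 0}"

definition growth_counts :: "nat \<Rightarrow> nat list set \<Rightarrow> (nat list \<Rightarrow> nat) set" where
  "growth_counts r T0 = {c \<in> supported_on (D r T0). 1 \<le> sum c (D r T0)}"

definition extensions :: "nat \<Rightarrow> nat list set \<Rightarrow> nat list set set" where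
  "extensions r T0 = {T1 \<in> trees_of_height (Suc r). ball_tree r T1 = T0}"

lemma length_new_generation: "v \<in> new_generation r T0 c \<Longrightarrow> length v = Suc r"
  by (auto simp: new_generation_def D_def)

lemma child_in_new_generation:
  "w \<in> D r T0 \<Longrightarrow> w @ [j] \<in> new_generation r T0 c \<longleftrightarrow> j < c w"
  by (auto simp: new_generation_def)

lemma card_new_generation:
  assumes "finite (D r T0)"
  shows "finite (new_generation r T0 c)" "card (new_generation r T0 c) = sum c (D r T0)"
proof -
  have eq: "new_generation r T0 c = (\<lambda>(w, j). w @ [j]) ` (SIGMA w:D r T0. {..<c w})"
    by (auto simp: new_generation_def)
  have "inj_on (\<lambda>(w, j). w @ [j]) (SIGMA w:D r T0. {..<c w})"
    by (auto simp: inj_on_def)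
  then show "finite (new_generation r T0 c)" "card (new_generation r T0 c) = sum c (D r T0)"
    unfolding eq using assms by (simp_all add: card_image)
qed

lemma D_Suc_graft:
  assumes T0: "T0 \<in> trees_of_height r"
  shows "D (Suc r) (graft r T0 c) = new_generation r T0 c"
    "card (D (Suc r) (graft r T0 c)) = sum c (D r T0)"
proof -
  show DN: "D (Suc r) (graft r T0 c) = new_generation r T0 c"
    using trees_of_heightD(3)[OF T0] length_new_generation by (fastforce simp: D_def graft_def)
  then show "card (D (Suc r) (graft r T0 c)) = sum c (D r T0)"
    using card_new_generation trees_of_heightD(6)[OF T0] by simp
qed

lemma n_edges_graft:
  assumes T0: "T0 \<in> trees_of_height r"
  shows "n_edges (graft r T0 c) = n_edges T0 + sum c (D r T0)"
proof -
  note F = trees_of_heightD[OF T0]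
  have "T0 \<inter> new_generation r T0 c = {}" using F(3) length_new_generation by fastforce
  moreover have "card T0 \<ge> 1"
    using F(1,2) by (auto simp: Suc_le_eq card_gt_0_iff rooted_planar_tree_def)
  ultimately show ?thesis
    using card_Un_disjoint[OF F(2) card_new_generation(1)[OF F(6)]]
      card_new_generation(2)[OF F(6)] by (simp add: n_edges_def graft_def)
qed

lemma rooted_planar_tree_graft:
  assumes T0: "T0 \<in> trees_of_height r"
  shows "rooted_planar_tree (graft r T0 c)"
  unfolding rooted_planar_tree_def
proof (intro conjI allI ballI impI)
  note F = trees_of_heightD[OF T0]
  show "[] \<in> graft r T0 c" "[0] \<in> graft r T0 c"
    using F(1) by (simp_all add: graft_def rooted_planar_tree_def)
  show "[1] \<notin> graft r T0 c"
    using F(1,5) length_new_generation[of "[1]" r T0 c]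
    by (auto simp: graft_def rooted_planar_tree_def)
  fix w assume "w \<in> graft r T0 c" "w \<noteq> []"
  then show "butlast w \<in> graft r T0 c"
    using F(1) by (auto simp: graft_def rooted_planar_tree_def new_generation_def D_def)
next
  fix w i assume "w @ [Suc i] \<in> graft r T0 c"
  then show "w @ [i] \<in> graft r T0 c"
    using trees_of_heightD(1)[OF T0]
    by (auto simp: graft_def rooted_planar_tree_def new_generation_def)
qed

lemma graft_in_extensions:
  assumes T0: "T0 \<in> trees_of_height r" and c: "c \<in> growth_counts r T0"
  shows "graft r T0 c \<in> extensions r T0"
proof -
  note F = trees_of_heightD[OF T0]
  have fin: "finite (graft r T0 c)"
    using F(2) card_new_generation(1)[OF F(6)] by (simp add: graft_def)
  have top: "ball_tree (Suc r) (graft r T0 c) = graft r T0 c"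
    using F(3) length_new_generation by (fastforce simp: ball_tree_def graft_def)
  have bottom: "ball_tree r (graft r T0 c) = T0"
    using F(3) length_new_generation by (fastforce simp: ball_tree_def graft_def)
  have "sum c (D r T0) \<ge> 1" using c by (simp add: growth_counts_def)
  then obtain w where "w \<in> D r T0" "c w > 0"
    by (metis not_one_le_zero neq0_conv sum.neutral)
  then have "w @ [0] \<in> D (Suc r) (graft r T0 c)"
    using D_Suc_graft(1)[OF T0] child_in_new_generation by simp
  then show ?thesis
    using rooted_planar_tree_graft[OF T0] fin top bottom
    by (auto simp: extensions_def trees_of_height_def finite_tree_of_height_def)
qed

lemma inj_on_graft:
  assumes T0: "T0 \<in> trees_of_height r"
  shows "inj_on (graft r T0) (supported_on (D r T0))"
proof (rule inj_onI, rule ext)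
  fix c c' w
  assume c: "c \<in> supported_on (D r T0)" and c': "c' \<in> supported_on (D r T0)"
    and eq: "graft r T0 c = graft r T0 c'"
  show "c w = c' w"
  proof (cases "w \<in> D r T0")
    case False
    then show ?thesis using c c' by (simp add: supported_on_def)
  next
    case True
    have "w @ [j] \<notin> T0" for j
      using trees_of_heightD(3)[OF T0, of "w @ [j]"] True by (auto simp: D_def)
    then have "j < c w \<longleftrightarrow> j < c' w" for j
      using eq child_in_new_generation[OF True] unfolding graft_def by blast
    then show ?thesis by (metis less_irrefl nat_neq_iff)
  qed
qed

definition offspring :: "nat \<Rightarrow> nat list set \<Rightarrow> nat list set \<Rightarrow> nat list \<Rightarrow> nat" where
  "offspring r T0 T1 w = (if w \<in> D r T0 then card {j. w @ [j] \<in> T1} else 0)"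

lemma extensionsD:
  assumes "T1 \<in> extensions r T0"
  shows "T1 \<in> trees_of_height (Suc r)" "ball_tree r T1 = T0"
  using assms by (auto simp: extensions_def)

lemma child_iff_less_offspring:
  assumes "T1 \<in> extensions r T0" "w \<in> D r T0"
  shows "w @ [j] \<in> T1 \<longleftrightarrow> j < offspring r T0 T1 w"
  using trees_of_heightD(1,2)[OF extensionsD(1)[OF assms(1)]] assms(2)
  by (subst child_iff_less_card_children) (simp_all add: offspring_def)

lemma extension_top_vertex:
  assumes T1: "T1 \<in> extensions r T0" and v: "v \<in> T1" "length v = Suc r"
  shows "\<exists>u j. v = u @ [j] \<and> u \<in> D r T0 \<and> j < offspring r T0 T1 u"
proof -
  define u where "u = butlast v"
  have "v \<noteq> []" using v by auto
  then have vu: "v = u @ [last v]" by (simp add: u_def)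
  have "u \<in> T1"
    using trees_of_heightD(1)[OF extensionsD(1)[OF T1]] v by (auto simp: u_def rooted_planar_tree_def)
  moreover have "length u = r" using v by (simp add: u_def)
  ultimately have u: "u \<in> D r T0" using extensionsD(2)[OF T1] by (auto simp: ball_tree_def D_def)
  then have "last v < offspring r T0 T1 u"
    using child_iff_less_offspring[OF T1 u, of "last v"] v vu by simp
  then show ?thesis using vu u by blast
qed

lemma extension_eq_graft_offspring:
  assumes T1: "T1 \<in> extensions r T0"
  shows "T1 = graft r T0 (offspring r T0 T1)"
proof (intro equalityI subsetI)
  note G = trees_of_heightD[OF extensionsD(1)[OF T1]]
  fix v assume v: "v \<in> T1"
  show "v \<in> graft r T0 (offspring r T0 T1)"
  proof (cases "length v \<le> r")
    case True
    then show ?thesis using v extensionsD(2)[OF T1] by (auto simp: ball_tree_def graft_def)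
  next
    case False
    then obtain u j where "v = u @ [j]" "u \<in> D r T0" "j < offspring r T0 T1 u"
      using G(3)[OF v] extension_top_vertex[OF T1 v] by auto
    then show ?thesis by (simp add: graft_def child_in_new_generation)
  qed
next
  fix v assume "v \<in> graft r T0 (offspring r T0 T1)"
  then consider "v \<in> T0" | w j where "v = w @ [j]" "w \<in> D r T0" "j < offspring r T0 T1 w"
    by (auto simp: graft_def new_generation_def)
  then show "v \<in> T1"
    by cases (use extensionsD(2)[OF T1] child_iff_less_offspring[OF T1] in \<open>auto simp: ball_tree_def\<close>)
qed

lemma offspring_in_growth_counts:
  assumes T0: "T0 \<in> trees_of_height r" and T1: "T1 \<in> extensions r T0"
  shows "offspring r T0 T1 \<in> growth_counts r T0"
proof -
  obtain v where "v \<in> T1" "length v = Suc r"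
    using trees_of_heightD(4)[OF extensionsD(1)[OF T1]] by (auto simp: D_def)
  then obtain u j where u: "u \<in> D r T0" "j < offspring r T0 T1 u"
    using extension_top_vertex[OF T1] by blast
  have "1 \<le> offspring r T0 T1 u" using u by simp
  also have "\<dots> \<le> sum (offspring r T0 T1) (D r T0)"
    using u trees_of_heightD(6)[OF T0] by (intro member_le_sum) auto
  finally show ?thesis by (simp add: growth_counts_def supported_on_def offspring_def)
qed

lemma bij_betw_graft_extensions:
  assumes "T0 \<in> trees_of_height r"
  shows "bij_betw (graft r T0) (growth_counts r T0) (extensions r T0)"
  unfolding bij_betw_def
proof
  show "inj_on (graft r T0) (growth_counts r T0)"
    using inj_on_graft[OF assms] by (rule inj_on_subset) (auto simp: growth_counts_def)
  show "graft r T0 ` growth_counts r T0 = extensions r T0"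
    using graft_in_extensions[OF assms] extension_eq_graft_offspring
      offspring_in_growth_counts[OF assms] by blast
qed

lemma Xfun_critical:
  fixes k :: real
  assumes "1 \<le> k"
  shows "Xfun (k / (1 + k)^2) = 1 / (1 + k)"
proof -
  have "1 - 4 * (k / (1 + k)^2) = ((1 + k)^2 - 4 * k) / (1 + k)^2"
    using assms by (simp add: field_simps)
  also have "\<dots> = ((k - 1) / (1 + k))^2"
    by (simp add: power_divide power2_eq_square algebra_simps)
  finally have "1 - 4 * (k / (1 + k)^2) = ((k - 1) / (1 + k))^2" .
  then have "sqrt (1 - 4 * (k / (1 + k)^2)) = (k - 1) / (1 + k)"
    using assms by simp
  then show ?thesis
    using assms by (simp add: Xfun_def field_simps)
qed

lemma critical_parameters:
  assumes "\<mu> < 0"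
  defines "X \<equiv> Xfun (gcrit \<mu>)"
  shows "0 < X" "X < 1/2" "kpar \<mu> = (1 - X) / X" "gcrit \<mu> = X * (1 - X)"
proof -
  define k where "k = kpar \<mu>"
  have k: "k > 1" using assms(1) by (simp add: k_def kpar_def)
  have X: "X = 1 / (1 + k)"
    using Xfun_critical[of k] k by (simp add: X_def gcrit_def k_def)
  show "0 < X" "X < 1/2" "kpar \<mu> = (1 - X) / X"
    unfolding X k_def[symmetric] using k by (simp_all add: field_simps)
  show "gcrit \<mu> = X * (1 - X)"
    unfolding X gcrit_def k_def[symmetric] using k by (simp add: field_simps power2_eq_square)
qed

lemma nn_integral_real_geometric_pmf:
  assumes "0 \<le> y" "y < 1"
  shows "(\<integral>\<^sup>+n. ennreal (real n) \<partial>measure_pmf (geometric_pmf (1 - y))) = ennreal (y / (1 - y))"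
proof -
  have p: "1 - y \<in> {0<..1}" using assms by auto
  have "(\<integral>\<^sup>+n. ennreal (real n) \<partial>measure_pmf (geometric_pmf (1 - y)))
        = ennreal (measure_pmf.expectation (geometric_pmf (1 - y)) real)"
    by (rule nn_integral_eq_integral[OF integrable_real_geometric_pmf[OF p]]) auto
  also have "\<dots> = ennreal (y / (1 - y))" using expectation_geometric_pmf[OF p] by simp
  finally show ?thesis .
qed

lemma nn_integral_sum_Pi_pmf_geometric:
  fixes A :: "'a set"
  assumes A: "finite A" and y: "0 \<le> y" "y < 1"
  shows "(\<integral>\<^sup>+c. ennreal (real (sum c A)) \<partial>measure_pmf (Pi_pmf A 0 (\<lambda>_. geometric_pmf (1 - y))))
       = ennreal (real (card A) * (y / (1 - y)))"
proof -
  define P where "P = Pi_pmf A 0 (\<lambda>_. geometric_pmf (1 - y))"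
  have "(\<integral>\<^sup>+c. ennreal (real (sum c A)) \<partial>measure_pmf P)
      = (\<Sum>a\<in>A. \<integral>\<^sup>+c. ennreal (real (c a)) \<partial>measure_pmf P)"
    by (subst nn_integral_sum[symmetric]) (simp_all add: sum_ennreal[symmetric] del: sum_ennreal)
  also have "\<dots> = (\<Sum>a\<in>A. ennreal (y / (1 - y)))"
  proof (rule sum.cong[OF refl])
    fix a assume "a \<in> A"
    have "(\<integral>\<^sup>+c. ennreal (real (c a)) \<partial>measure_pmf P)
        = (\<integral>\<^sup>+n. ennreal (real n) \<partial>measure_pmf (map_pmf (\<lambda>c. c a) P))"
      by simp
    also have "map_pmf (\<lambda>c. c a) P = geometric_pmf (1 - y)"
      using \<open>a \<in> A\<close> Pi_pmf_component[OF A, of a 0 "\<lambda>_. geometric_pmf (1 - y)"]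
      by (simp add: P_def)
    finally show "(\<integral>\<^sup>+c. ennreal (real (c a)) \<partial>measure_pmf P) = ennreal (y / (1 - y))"
      using nn_integral_real_geometric_pmf[OF y] by simp
  qed
  also have "\<dots> = ennreal (real (card A) * (y / (1 - y)))"
    by (simp add: ennreal_of_nat_eq_real_of_nat ennreal_mult' del: times_divide_eq_right)
  finally show ?thesis by (simp add: P_def)
qed

lemma pmf_Pi_pmf_geometric:
  fixes A :: "'a set"
  assumes A: "finite A" and y: "0 \<le> y" "y < 1"
  shows "pmf (Pi_pmf A 0 (\<lambda>_. geometric_pmf (1 - y))) c
       = indicator (supported_on A) c * ((1 - y) ^ card A * y ^ sum c A)"
proof -
  have "(\<Prod>x\<in>A. pmf (geometric_pmf (1 - y)) (c x)) = (1 - y) ^ card A * y ^ sum c A"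
    using y by (simp add: pmf_geometric prod.distrib power_sum mult.commute)
  then show ?thesis
    by (simp add: pmf_Pi[OF A] supported_on_def indicator_def)
qed

text \<open>The weights \<open>(1 - y)^|A| y^(\<Sum>c)\<close> on \<open>supported_on A\<close> form the law of |A| independent
  geometric variables, so the left-hand side is \<open>(1 - y)^-|A|\<close> times the mean of their sum.\<close>
lemma nn_integral_supported_on_sum_geometric:
  fixes A :: "'a set"
  assumes A: "finite A" and y: "0 \<le> y" "y < 1"
  shows "(\<integral>\<^sup>+c. ennreal (real (sum c A) * y ^ sum c A) \<partial>count_space (supported_on A))
         = ennreal (real (card A) * y / (1 - y) ^ (card A + 1))"
proof -
  define P where "P = Pi_pmf A 0 (\<lambda>_. geometric_pmf (1 - y))"
  define L where "L = (\<integral>\<^sup>+c. ennreal (real (sum c A) * y ^ sum c A) \<partial>count_space (supported_on A))"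
  have "(\<integral>\<^sup>+c. ennreal (real (sum c A)) \<partial>measure_pmf P)
      = (\<integral>\<^sup>+c. ennreal (pmf P c) * ennreal (real (sum c A)) \<partial>count_space UNIV)"
    by (rule nn_integral_measure_pmf)
  also have "\<dots> = (\<integral>\<^sup>+c. ennreal ((1 - y) ^ card A) *
            (ennreal (real (sum c A) * y ^ sum c A) * indicator (supported_on A) c) \<partial>count_space UNIV)"
  proof (intro nn_integral_cong)
    fix c
    have nonneg: "0 \<le> (1 - y) ^ card A" "0 \<le> y ^ sum c A" using y by auto
    show "ennreal (pmf P c) * ennreal (real (sum c A)) = ennreal ((1 - y) ^ card A) *
          (ennreal (real (sum c A) * y ^ sum c A) * indicator (supported_on A) c)"
    proof (cases "c \<in> supported_on A")
      case True
      have "ennreal (pmf P c) * ennreal (real (sum c A))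
          = ennreal ((1 - y) ^ card A * y ^ sum c A * real (sum c A))"
        using True nonneg by (simp add: P_def pmf_Pi_pmf_geometric[OF A y] ennreal_mult')
      also have "\<dots> = ennreal ((1 - y) ^ card A) * ennreal (real (sum c A) * y ^ sum c A)"
        using nonneg by (subst ennreal_mult'[symmetric]) (simp_all add: mult_ac)
      finally show ?thesis using True by simp
    qed (simp add: P_def pmf_Pi_pmf_geometric[OF A y])
  qed
  also have "\<dots> = ennreal ((1 - y) ^ card A) * L"
    by (subst nn_integral_cmult) (auto simp: L_def nn_integral_count_space_indicator)
  finally have mean: "ennreal ((1 - y) ^ card A) * L = ennreal (real (card A) * (y / (1 - y)))"
    using nn_integral_sum_Pi_pmf_geometric[OF A y] by (simp add: P_def)
  have pos: "0 < (1 - y) ^ card A" using y by simp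
  have "L = ennreal (1 / (1 - y) ^ card A) * (ennreal ((1 - y) ^ card A) * L)"
    using pos y by (simp add: mult.assoc[symmetric] ennreal_mult''[symmetric])
  also have "\<dots> = ennreal (1 / (1 - y) ^ card A * (real (card A) * (y / (1 - y))))"
    using mean pos y by (simp add: ennreal_mult''[symmetric])
  also have "1 / (1 - y) ^ card A * (real (card A) * (y / (1 - y)))
           = real (card A) * y / (1 - y) ^ (card A + 1)"
    using y by (simp add: field_simps)
  finally show ?thesis by (simp add: L_def)
qed

definition cylinder_weight :: "real \<Rightarrow> nat \<Rightarrow> nat list set \<Rightarrow> real" where
  "cylinder_weight \<mu> r T0 =
     real (card (D r T0)) * kpar \<mu> ^ (r - 1) * gcrit \<mu> ^ (n_edges T0 - card (D r T0))
       * Xfun (gcrit \<mu>) ^ (card (D r T0) - 1)"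

lemma cylinder_weight_nonneg: "0 \<le> cylinder_weight \<mu> r T0"
proof -
  have "0 \<le> gcrit \<mu>" by (simp add: gcrit_def kpar_def)
  then have "sqrt (1 - 4 * gcrit \<mu>) \<le> 1" by simp
  then have "0 \<le> Xfun (gcrit \<mu>)" by (simp add: Xfun_def)
  with \<open>0 \<le> gcrit \<mu>\<close> show ?thesis by (simp add: cylinder_weight_def kpar_def)
qed

lemma kpar_mult_gcrit_power:
  assumes "\<mu> < 0" "1 \<le> K"
  defines "X \<equiv> Xfun (gcrit \<mu>)"
  shows "kpar \<mu> * gcrit \<mu> ^ K = X ^ (K - 1) * (1 - X) ^ (K + 1)"
proof -
  note P = critical_parameters[OF assms(1), folded X_def]
  obtain K' where K: "K = Suc K'" using assms(2) by (cases K) auto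
  show ?thesis
    unfolding P(3,4) K power_mult_distrib using P(1) by (simp add: field_simps)
qed

lemma cylinder_weight_graft:
  assumes mu: "\<mu> < 0" and T0: "T0 \<in> trees_of_height r" and c: "c \<in> growth_counts r T0"
  defines "X \<equiv> Xfun (gcrit \<mu>)" and "m \<equiv> sum c (D r T0)"
  shows "cylinder_weight \<mu> (Suc r) (graft r T0 c) * s ^ card (D (Suc r) (graft r T0 c))
       = kpar \<mu> ^ r * gcrit \<mu> ^ n_edges T0 / X * (real m * (X * s) ^ m)"
proof -
  obtain m' where m: "m = Suc m'" using c by (cases m) (auto simp: m_def growth_counts_def)
  have "0 < X" using critical_parameters(1)[OF mu] by (simp add: X_def)
  then show ?thesis
    using D_Suc_graft(2)[OF T0] n_edges_graft[OF T0]
    by (simp add: cylinder_weight_def X_def[symmetric] m_def[symmetric] m power_mult_distrib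
        field_simps)
qed

lemma cylinder_weight_geometric_factor:
  assumes mu: "\<mu> < 0" and T0: "T0 \<in> trees_of_height r"
  defines "X \<equiv> Xfun (gcrit \<mu>)" and "K \<equiv> card (D r T0)"
  shows "kpar \<mu> ^ r * gcrit \<mu> ^ n_edges T0 / X * (real K * (X * s) / (1 - X * s) ^ (K + 1))
       = cylinder_weight \<mu> r T0 * (s * ((1 - X) / (1 - X * s)) ^ (K + 1))"
proof -
  define k where "k = kpar \<mu>"
  define g where "g = gcrit \<mu>"
  define n where "n = n_edges T0"
  have KN: "1 \<le> K" "K \<le> n" using card_D_trees_of_height[OF T0] by (simp_all add: K_def n_def)
  have "k ^ r = k ^ (r - 1) * k" "g ^ n = g ^ (n - K) * g ^ K"
    using trees_of_heightD(5)[OF T0] KN by (simp_all flip: power_Suc2 power_add)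
  then have "k ^ r * g ^ n / X * (real K * (X * s) / (1 - X * s) ^ (K + 1))
           = real K * k ^ (r - 1) * g ^ (n - K) * (k * g ^ K) * s / (1 - X * s) ^ (K + 1)"
    using critical_parameters(1)[OF mu] by (simp add: X_def field_simps)
  also have "\<dots> = cylinder_weight \<mu> r T0 * (s * ((1 - X) / (1 - X * s)) ^ (K + 1))"
    using kpar_mult_gcrit_power[OF mu KN(1)]
    by (simp add: cylinder_weight_def k_def g_def K_def n_def X_def power_divide)
  finally show ?thesis by (simp add: k_def g_def n_def)
qed

text \<open>Over the ball of radius r, the offspring numbers of the |D_r| top vertices are weighted
  like independent geometric variables with parameter 1 - X s.\<close>
lemma nn_integral_growth_counts:
  assumes mu: "\<mu> < 0" and T0: "T0 \<in> trees_of_height r" and s: "0 \<le> s" "Xfun (gcrit \<mu>) * s < 1"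
  defines "X \<equiv> Xfun (gcrit \<mu>)"
  shows "(\<integral>\<^sup>+c. ennreal (cylinder_weight \<mu> (Suc r) (graft r T0 c)
                          * s ^ card (D (Suc r) (graft r T0 c))) \<partial>count_space (growth_counts r T0))
       = ennreal (cylinder_weight \<mu> r T0 * (s * ((1 - X) / (1 - X * s)) ^ (card (D r T0) + 1)))"
proof -
  note P = critical_parameters[OF mu, folded X_def]
  define K where "K = card (D r T0)"
  define C where "C = kpar \<mu> ^ r * gcrit \<mu> ^ n_edges T0 / X"
  have C: "0 \<le> C" using P by (simp add: C_def)
  define h where "h c = ennreal (real (sum c (D r T0)) * (X * s) ^ sum c (D r T0))" for c
  have "(\<integral>\<^sup>+c. ennreal (cylinder_weight \<mu> (Suc r) (graft r T0 c)
                          * s ^ card (D (Suc r) (graft r T0 c))) \<partial>count_space (growth_counts r T0))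
      = (\<integral>\<^sup>+c. ennreal (C * (real (sum c (D r T0)) * (X * s) ^ sum c (D r T0)))
              \<partial>count_space (growth_counts r T0))"
    unfolding C_def X_def
    by (intro nn_integral_cong) (simp only: space_count_space cylinder_weight_graft[OF mu T0])
  also have "\<dots> = (\<integral>\<^sup>+c. ennreal C * h c \<partial>count_space (growth_counts r T0))"
    by (simp add: h_def ennreal_mult'[OF C])
  also have "\<dots> = (\<integral>\<^sup>+c. ennreal C * h c \<partial>count_space (supported_on (D r T0)))"
    by (rule nn_integral_count_space_eq)
       (auto simp: growth_counts_def h_def Suc_le_eq simp del: of_nat_sum)
  also have "\<dots> = ennreal C * (\<integral>\<^sup>+c. h c \<partial>count_space (supported_on (D r T0)))"
    by (rule nn_integral_cmult) simp
  also have "\<dots> = ennreal C * ennreal (real K * (X * s) / (1 - X * s) ^ (K + 1))"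
  proof -
    have "0 \<le> X * s" "X * s < 1" using P(1) s by (simp_all add: X_def)
    then show ?thesis
      unfolding h_def K_def
      by (simp only: nn_integral_supported_on_sum_geometric[OF trees_of_heightD(6)[OF T0]])
  qed
  also have "\<dots> = ennreal (C * (real K * (X * s) / (1 - X * s) ^ (K + 1)))"
    using C by (rule ennreal_mult'[symmetric])
  also have "C * (real K * (X * s) / (1 - X * s) ^ (K + 1))
           = cylinder_weight \<mu> r T0 * (s * ((1 - X) / (1 - X * s)) ^ (K + 1))"
    unfolding C_def X_def K_def by (rule cylinder_weight_geometric_factor[OF mu T0])
  finally show ?thesis by (simp add: K_def)
qed

lemma nn_integral_trees_of_height_Suc:
  assumes r: "1 \<le> r"
  shows "(\<integral>\<^sup>+T1. f T1 \<partial>count_space (trees_of_height (Suc r)))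
       = (\<integral>\<^sup>+T0. (\<integral>\<^sup>+c. f (graft r T0 c) \<partial>count_space (growth_counts r T0))
              \<partial>count_space (trees_of_height r))"
proof -
  have "(\<integral>\<^sup>+T1. f T1 \<partial>count_space (trees_of_height (Suc r)))
      = (\<integral>\<^sup>+T1. (\<integral>\<^sup>+T0. f T1 * indicator {ball_tree r T1} T0 \<partial>count_space (trees_of_height r))
              \<partial>count_space (trees_of_height (Suc r)))"
  proof (intro nn_integral_cong)
    fix T1 assume "T1 \<in> space (count_space (trees_of_height (Suc r)))"
    then have "ball_tree r T1 \<in> trees_of_height r" using ball_tree_in_trees_of_height r by simp
    then show "f T1 = (\<integral>\<^sup>+T0. f T1 * indicator {ball_tree r T1} T0 \<partial>count_space (trees_of_height r))"
      by (subst nn_integral_count_space'[where A="{ball_tree r T1}"]) auto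
  qed
  also have "\<dots> = (\<integral>\<^sup>+T0. (\<integral>\<^sup>+T1. f T1 * indicator {ball_tree r T1} T0
                           \<partial>count_space (trees_of_height (Suc r))) \<partial>count_space (trees_of_height r))"
    by (rule nn_integral_count_space_nn_integral[OF countable_trees_of_height]) simp
  also have "\<dots> = (\<integral>\<^sup>+T0. (\<integral>\<^sup>+T1. f T1 \<partial>count_space (extensions r T0)) \<partial>count_space (trees_of_height r))"
    by (intro nn_integral_cong)
       (auto simp: nn_integral_count_space_indicator extensions_def indicator_def
             intro!: nn_integral_cong)
  also have "\<dots> = (\<integral>\<^sup>+T0. (\<integral>\<^sup>+c. f (graft r T0 c) \<partial>count_space (growth_counts r T0))
                      \<partial>count_space (trees_of_height r))"
    by (intro nn_integral_cong) (simp add: nn_integral_bij_count_space[OF bij_betw_graft_extensions])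
  finally show ?thesis .
qed

definition generation_size_gf :: "real \<Rightarrow> nat \<Rightarrow> real \<Rightarrow> ennreal" where
  "generation_size_gf \<mu> r s =
     (\<integral>\<^sup>+T0. ennreal (cylinder_weight \<mu> r T0 * s ^ card (D r T0)) \<partial>count_space (trees_of_height r))"

lemma generation_size_gf_Suc:
  assumes mu: "\<mu> < 0" and r: "1 \<le> r" and s: "0 \<le> s" "Xfun (gcrit \<mu>) * s < 1"
  defines "X \<equiv> Xfun (gcrit \<mu>)"
  shows "generation_size_gf \<mu> (Suc r) s
       = (\<integral>\<^sup>+T0. ennreal (cylinder_weight \<mu> r T0 * (s * ((1 - X) / (1 - X * s)) ^ (card (D r T0) + 1)))
            \<partial>count_space (trees_of_height r))"
  unfolding generation_size_gf_def nn_integral_trees_of_height_Suc[OF r] X_def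
  by (intro nn_integral_cong) (simp add: nn_integral_growth_counts[OF mu _ s])

lemma generation_size_gf_1: "0 \<le> s \<Longrightarrow> generation_size_gf \<mu> 1 s = ennreal s"
proof -
  have D: "D (Suc 0) {[], [0::nat]} = {[0]}" by (auto simp: D_def)
  assume "0 \<le> s"
  then show ?thesis
    unfolding generation_size_gf_def trees_of_height_1
    by (simp add: nn_integral_count_space_finite cylinder_weight_def D n_edges_def)
qed

lemma generation_size_gf_at_1:
  assumes mu: "\<mu> < 0" and r: "1 \<le> r"
  shows "generation_size_gf \<mu> r 1 = 1"
  using r
proof (induction r rule: dec_induct)
  case base
  show ?case using generation_size_gf_1[of 1] by simp
next
  case (step r)
  note P = critical_parameters[OF mu]
  have "generation_size_gf \<mu> (Suc r) 1
      = (\<integral>\<^sup>+T0. ennreal (cylinder_weight \<mu> r T0 * (1 * ((1 - Xfun (gcrit \<mu>))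
                     / (1 - Xfun (gcrit \<mu>) * 1)) ^ (card (D r T0) + 1))) \<partial>count_space (trees_of_height r))"
    by (rule generation_size_gf_Suc[OF mu step.hyps(1)]) (use P(1,2) in auto)
  also have "\<dots> = generation_size_gf \<mu> r 1"
    using P(1,2) by (simp add: generation_size_gf_def)
  finally have "generation_size_gf \<mu> (Suc r) 1 = generation_size_gf \<mu> r 1" .
  with step.IH show ?case by simp
qed

text \<open>The point is that q/\<lambda> < 1, so \<open>\<lambda> q^(K+1) = \<lambda> q (q/\<lambda>)^K \<lambda>^K\<close> is eventually below \<open>\<lambda>^K/2\<close>.\<close>
lemma power_absorbed_by_half_power:
  fixes lam q :: real
  assumes "0 < lam" "0 \<le> q" "q < lam"
  shows "\<exists>b\<ge>0. \<forall>K. lam * q ^ (K + 1) \<le> lam ^ K / 2 + b"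
proof -
  define \<rho> where "\<rho> = q / lam"
  have \<rho>: "0 \<le> \<rho>" "\<rho> < 1" using assms by (simp_all add: \<rho>_def)
  have "(\<lambda>K. lam * q * \<rho> ^ K) \<longlonglongrightarrow> lam * q * 0"
    using \<rho> by (intro tendsto_mult_left LIMSEQ_power_zero) auto
  then have "eventually (\<lambda>K. lam * q * \<rho> ^ K < 1/2) sequentially"
    by (intro order_tendstoD) auto
  then obtain K0 where K0: "\<And>K. K0 \<le> K \<Longrightarrow> lam * q * \<rho> ^ K < 1/2"
    by (auto simp: eventually_sequentially)
  define b where "b = (\<Sum>K<K0. lam * q ^ (K + 1))"
  have "0 \<le> b" using assms by (simp add: b_def sum_nonneg)
  have "lam * q ^ (K + 1) \<le> lam ^ K / 2 + b" for K
  proof (cases "K0 \<le> K")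
    case True
    have "lam * q ^ (K + 1) = (lam * q * \<rho> ^ K) * lam ^ K"
      using assms(1) by (simp add: \<rho>_def power_divide field_simps)
    also have "\<dots> \<le> 1/2 * lam ^ K"
      using K0[OF True] assms(1) by (intro mult_right_mono) auto
    finally show ?thesis using \<open>0 \<le> b\<close> by linarith
  next
    case False
    then have "lam * q ^ (K + 1) \<le> b"
      unfolding b_def using assms by (intro member_le_sum) auto
    moreover have "0 \<le> lam ^ K" using assms(1) by simp
    ultimately show ?thesis by linarith
  qed
  with \<open>0 \<le> b\<close> show ?thesis by blast
qed

lemma generation_size_gf_Suc_le:
  assumes mu: "\<mu> < 0" and r: "1 \<le> r"
  defines "X \<equiv> Xfun (gcrit \<mu>)"
  defines "lam \<equiv> 1 / (2 * X)" and "q \<equiv> 2 * (1 - X)"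
  assumes b: "0 \<le> b" "\<And>K. lam * q ^ (K + 1) \<le> lam ^ K / 2 + b"
  shows "generation_size_gf \<mu> (Suc r) lam \<le> ennreal (1/2) * generation_size_gf \<mu> r lam + ennreal b"
proof -
  have lam: "0 < lam" "X * lam = 1/2"
    using critical_parameters(1)[OF mu] by (simp_all add: lam_def X_def)
  have phi: "(1 - X) / (1 - X * lam) = q" unfolding lam(2) q_def by simp
  have "generation_size_gf \<mu> (Suc r) lam
      = (\<integral>\<^sup>+T0. ennreal (cylinder_weight \<mu> r T0 * (lam * q ^ (card (D r T0) + 1)))
           \<partial>count_space (trees_of_height r))"
    by (rule generation_size_gf_Suc[OF mu r, of lam, folded X_def, unfolded phi])
       (use lam in auto)
  also have "\<dots> \<le> (\<integral>\<^sup>+T0. ennreal (1/2) * ennreal (cylinder_weight \<mu> r T0 * lam ^ card (D r T0))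
                       + ennreal b * ennreal (cylinder_weight \<mu> r T0) \<partial>count_space (trees_of_height r))"
  proof (intro nn_integral_mono)
    fix T0
    define w where "w = cylinder_weight \<mu> r T0"
    define K where "K = card (D r T0)"
    have w: "0 \<le> w" by (simp add: w_def cylinder_weight_nonneg)
    have "w * (lam * q ^ (K + 1)) \<le> 1/2 * (w * lam ^ K) + b * w"
      using mult_left_mono[OF b(2) w] by (simp add: algebra_simps)
    then have "ennreal (w * (lam * q ^ (K + 1))) \<le> ennreal (1/2 * (w * lam ^ K) + b * w)"
      by (rule ennreal_leI)
    also have "\<dots> = ennreal (1/2) * ennreal (w * lam ^ K) + ennreal b * ennreal w"
    proof -
      have "0 \<le> 1/2 * (w * lam ^ K)" "0 \<le> b * w" using w lam(1) b(1) by simp_all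
      moreover have "ennreal (1/2 * (w * lam ^ K)) = ennreal (1/2) * ennreal (w * lam ^ K)"
        by (rule ennreal_mult') simp
      moreover have "ennreal (b * w) = ennreal b * ennreal w"
        by (rule ennreal_mult'[OF b(1)])
      ultimately show ?thesis by (simp only: ennreal_plus)
    qed
    finally show "ennreal (w * (lam * q ^ (K + 1)))
        \<le> ennreal (1/2) * ennreal (w * lam ^ K) + ennreal b * ennreal w" .
  qed
  also have "\<dots> = ennreal (1/2) * generation_size_gf \<mu> r lam + ennreal b * generation_size_gf \<mu> r 1"
    by (simp add: generation_size_gf_def nn_integral_add nn_integral_cmult)
  finally show ?thesis using generation_size_gf_at_1[OF mu r] by simp
qed

lemma generation_size_gf_bounded:
  assumes mu: "\<mu> < 0"
  defines "lam \<equiv> 1 / (2 * Xfun (gcrit \<mu>))"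
  shows "\<exists>V\<ge>0. \<forall>r\<ge>1. generation_size_gf \<mu> r lam \<le> ennreal V"
proof -
  define X where "X = Xfun (gcrit \<mu>)"
  note P = critical_parameters[OF mu, folded X_def]
  define q where "q = 2 * (1 - X)"
  have lam: "lam = 1 / (2 * X)" "0 < lam" using P(1) by (simp_all add: lam_def X_def)
  have "q < lam"
  proof -
    have "0 < (1 - 2 * X)^2" using P(2) by simp
    then show ?thesis using P(1) by (simp add: lam(1) q_def field_simps power2_eq_square)
  qed
  then obtain b where b: "0 \<le> b" "\<And>K. lam * q ^ (K + 1) \<le> lam ^ K / 2 + b"
    using power_absorbed_by_half_power[of lam q] lam(2) P(2) by (auto simp: q_def)
  have half_step: "generation_size_gf \<mu> (Suc r) lam
      \<le> ennreal (1/2) * generation_size_gf \<mu> r lam + ennreal b" if "1 \<le> r" for r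
    using generation_size_gf_Suc_le[OF mu that b(1)] b(2) unfolding lam_def q_def X_def by blast
  define V where "V = max lam (2 * b)"
  have "0 \<le> V" using lam(2) by (simp add: V_def)
  have "generation_size_gf \<mu> r lam \<le> ennreal V" if "1 \<le> r" for r
    using that
  proof (induction r rule: dec_induct)
    case base
    show ?case using generation_size_gf_1[of lam \<mu>] lam(2) by (simp add: V_def)
  next
    case (step r)
    have "generation_size_gf \<mu> (Suc r) lam \<le> ennreal (1/2) * ennreal V + ennreal b"
      using step.IH by (intro order_trans[OF half_step[OF step.hyps(1)]] add_mono mult_left_mono) auto
    also have "\<dots> = ennreal (1/2 * V + b)"
    proof -
      have "ennreal (1/2) * ennreal V = ennreal (1/2 * V)" by (rule ennreal_mult'[symmetric]) simp
      then show ?thesis using \<open>0 \<le> V\<close> b(1) by (simp add: ennreal_plus)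
    qed
    also have "\<dots> \<le> ennreal V" by (intro ennreal_leI) (simp add: V_def)
    finally show ?case .
  qed
  with \<open>0 \<le> V\<close> show ?thesis by blast
qed

definition cylinder :: "nat list set measure \<Rightarrow> nat \<Rightarrow> nat list set \<Rightarrow> nat list set set" where
  "cylinder M r T0 = {T \<in> space M. ball_tree r T = T0}"

lemma D_ball_tree [simp]: "D r (ball_tree r T) = D r T"
  by (auto simp: D_def ball_tree_def)

lemma nu_measure_cylinders:
  assumes nu: "is_nu_measure \<mu> M" and A: "A \<subseteq> trees_of_height r"
  shows "(\<Union>T0\<in>A. cylinder M r T0) \<in> sets M"
    "emeasure M (\<Union>T0\<in>A. cylinder M r T0)
       = (\<integral>\<^sup>+T0. ennreal (cylinder_weight \<mu> r T0) \<partial>count_space A)"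
proof -
  interpret prob_space M using nu by (simp add: is_nu_measure_def)
  have cyl: "cylinder M r T0 \<in> sets M"
    "emeasure M (cylinder M r T0) = ennreal (cylinder_weight \<mu> r T0)" if "T0 \<in> A" for T0
    using nu that A unfolding is_nu_measure_def
    by (auto simp: cylinder_def cylinder_weight_def trees_of_height_def Let_def emeasure_eq_measure)
  have countable: "countable A"
    using countable_subset[OF A countable_trees_of_height] .
  show "(\<Union>T0\<in>A. cylinder M r T0) \<in> sets M"
    using cyl(1) by (intro sets.countable_UN''[OF countable])
  have "disjoint_family_on (cylinder M r) A"
    by (auto simp: disjoint_family_on_def cylinder_def)
  then show "emeasure M (\<Union>T0\<in>A. cylinder M r T0)
       = (\<integral>\<^sup>+T0. ennreal (cylinder_weight \<mu> r T0) \<partial>count_space A)"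
    using cyl by (subst emeasure_UN_countable[OF _ countable]) (auto intro!: nn_integral_cong)
qed

lemma AE_ball_tree_in_trees_of_height:
  assumes mu: "\<mu> < 0" and nu: "is_nu_measure \<mu> M"
  shows "AE T in M. \<forall>r\<ge>1. ball_tree r T \<in> trees_of_height r"
proof -
  interpret prob_space M using nu by (simp add: is_nu_measure_def)
  have "AE T in M. T \<in> (\<Union>T0\<in>trees_of_height r. cylinder M r T0)" if "1 \<le> r" for r
    using nu_measure_cylinders(1)[OF nu subset_refl]
  proof (subst AE_in_set_eq_1)
    note cyl = nu_measure_cylinders[OF nu subset_refl]
    have "emeasure M (\<Union>T0\<in>trees_of_height r. cylinder M r T0) = generation_size_gf \<mu> r 1"
      by (simp add: cyl(2) generation_size_gf_def)
    then show "prob (\<Union>T0\<in>trees_of_height r. cylinder M r T0) = 1"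
      using generation_size_gf_at_1[OF mu that] by (simp add: emeasure_eq_measure)
  qed
  then have "AE T in M. \<forall>r. 1 \<le> r \<longrightarrow> T \<in> (\<Union>T0\<in>trees_of_height r. cylinder M r T0)"
    by (subst AE_all_countable) (auto intro: AE_I2)
  then show ?thesis
    by eventually_elim (auto simp: cylinder_def)
qed

lemma measure_cylinders_markov:
  assumes nu: "is_nu_measure \<mu> M" and s: "0 \<le> s" and a: "0 < a"
    and V: "0 \<le> V" "generation_size_gf \<mu> r s \<le> ennreal V"
  shows "measure M (\<Union>T0\<in>{T0 \<in> trees_of_height r. a \<le> s ^ card (D r T0)}. cylinder M r T0)
       \<le> V / a"
proof -
  interpret prob_space M using nu by (simp add: is_nu_measure_def)
  have "emeasure M (\<Union>T0\<in>{T0 \<in> trees_of_height r. a \<le> s ^ card (D r T0)}. cylinder M r T0)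
      = (\<integral>\<^sup>+T0. ennreal (cylinder_weight \<mu> r T0) * indicator {T0. a \<le> s ^ card (D r T0)} T0
           \<partial>count_space (trees_of_height r))"
    by (subst nu_measure_cylinders(2)[OF nu])
       (auto simp: nn_integral_count_space_indicator indicator_def intro!: nn_integral_cong)
  also have "\<dots> \<le> (\<integral>\<^sup>+T0. ennreal (1 / a) * ennreal (cylinder_weight \<mu> r T0 * s ^ card (D r T0))
                   \<partial>count_space (trees_of_height r))"
  proof (intro nn_integral_mono)
    fix T0
    define w where "w = cylinder_weight \<mu> r T0"
    define K where "K = card (D r T0)"
    show "ennreal w * indicator {T0. a \<le> s ^ card (D r T0)} T0 \<le> ennreal (1 / a) * ennreal (w * s ^ K)"
    proof (cases "a \<le> s ^ K")
      case True
      have "w * a \<le> w * s ^ K"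
        using True by (intro mult_left_mono) (simp_all add: w_def cylinder_weight_nonneg)
      then have "w \<le> 1 / a * (w * s ^ K)" using a by (simp add: field_simps)
      then show ?thesis using True a by (simp add: K_def ennreal_mult'[symmetric] ennreal_leI)
    qed (simp add: K_def)
  qed
  also have "\<dots> = ennreal (1 / a) * generation_size_gf \<mu> r s"
    by (simp add: nn_integral_cmult generation_size_gf_def)
  also have "\<dots> \<le> ennreal (1 / a) * ennreal V"
    by (intro mult_left_mono V(2)) simp
  also have "\<dots> = ennreal (V / a)"
    using a by (simp add: ennreal_mult'[symmetric])
  finally show ?thesis using V(1) a by (simp add: emeasure_eq_measure)
qed

lemma exponent_le_log_of_power_less:
  fixes lam x :: real
  assumes "1 < lam" "0 < x" "lam ^ K < x ^ 2"
  shows "real K \<le> 2 / ln lam * ln x"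
proof -
  have "real K * ln lam < 2 * ln x"
    using assms ln_less_cancel_iff[of "lam ^ K" "x ^ 2"] by (simp add: ln_realpow)
  then show ?thesis using assms(1) by (simp add: field_simps)
qed

lemma AE_eventually_card_D_le_log:
  assumes mu: "\<mu> < 0" and nu: "is_nu_measure \<mu> M"
  shows "\<exists>C>0. AE T in M. eventually (\<lambda>r. real (card (D r T)) \<le> C * ln (real r)) sequentially"
proof -
  interpret prob_space M using nu by (simp add: is_nu_measure_def)
  define lam where "lam = 1 / (2 * Xfun (gcrit \<mu>))"
  obtain V where V: "0 \<le> V" "\<And>r. 1 \<le> r \<Longrightarrow> generation_size_gf \<mu> r lam \<le> ennreal V"
    using generation_size_gf_bounded[OF mu] unfolding lam_def by blast
  have lam: "1 < lam" using critical_parameters(1,2)[OF mu] by (simp add: lam_def field_simps)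
  define B where "B r = (\<Union>T0\<in>{T0 \<in> trees_of_height r. real r ^ 2 \<le> lam ^ card (D r T0)}.
                          cylinder M r T0)" for r
  have B_sets: "B r \<in> sets M" for r
    unfolding B_def by (rule nu_measure_cylinders(1)[OF nu]) auto
  have B_measure: "measure M (B r) \<le> V / real r ^ 2" if r: "1 \<le> r" for r
    unfolding B_def using r lam V by (intro measure_cylinders_markov[OF nu]) auto
  have "summable (\<lambda>r. measure M (B r))"
  proof (rule summable_comparison_test'[where N = 1])
    show "summable (\<lambda>r. V * inverse (real r ^ 2))"
      by (intro summable_mult inverse_power_summable) simp
  qed (use B_measure in \<open>simp add: divide_inverse\<close>)
  then have "AE T in M. eventually (\<lambda>r. T \<in> space M - B r) sequentially"
    by (intro borel_cantelli_AE1[OF B_sets]) (simp add: less_top[symmetric])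
  with AE_ball_tree_in_trees_of_height[OF mu nu]
  have "AE T in M. eventually (\<lambda>r. real (card (D r T)) \<le> 2 / ln lam * ln (real r)) sequentially"
  proof eventually_elim
    case (elim T)
    then have "eventually (\<lambda>r. 1 \<le> r \<and> T \<in> space M - B r) sequentially"
      using eventually_conj[OF eventually_ge_at_top[of 1] elim(2)] by simp
    then show ?case
    proof (rule eventually_mono)
      fix r assume r: "1 \<le> r \<and> T \<in> space M - B r"
      then have "\<not> real r ^ 2 \<le> lam ^ card (D r T)"
        using elim(1) by (auto simp: B_def cylinder_def)
      then show "real (card (D r T)) \<le> 2 / ln lam * ln (real r)"
        using r lam by (intro exponent_le_log_of_power_less) auto
    qed
  qed
  moreover have "0 < 2 / ln lam" using lam by simp
  ultimately show ?thesis by blast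
qed

lemma log_bound_partial_sums:
  fixes d :: "nat \<Rightarrow> nat" and C :: real
  assumes C: "0 < C" and pos: "\<And>r. 1 \<le> r \<Longrightarrow> 1 \<le> d r"
    and ev: "eventually (\<lambda>r. real (d r) \<le> C * ln (real r)) sequentially"
  shows "\<exists>r0. \<forall>r\<ge>r0. 1 \<le> d r \<and> real (d r) \<le> C * ln (real r) \<and>
                   r \<le> (\<Sum>s=1..r. d s) \<and> real (\<Sum>s=1..r. d s) \<le> C * real r * ln (real r)"
proof -
  obtain r1 where r1: "1 \<le> r1" "\<And>r. r1 \<le> r \<Longrightarrow> real (d r) \<le> C * ln (real r)"
    using ev unfolding eventually_sequentially by (metis le_add2 le_trans nat_le_linear)
  define A where "A = (\<Sum>s<r1. real (d s))"
  define r0 where "r0 = max r1 (nat \<lceil>exp (A / C)\<rceil>)"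
  have "1 \<le> d r \<and> real (d r) \<le> C * ln (real r) \<and>
        r \<le> (\<Sum>s=1..r. d s) \<and> real (\<Sum>s=1..r. d s) \<le> C * real r * ln (real r)"
    if r: "r0 \<le> r" for r
  proof -
    have "exp (A / C) \<le> real r" using r by (simp add: r0_def nat_le_iff ceiling_le_iff)
    then have "A / C \<le> ln (real r)"
      using r r1(1) by (subst ln_ge_iff) (auto simp: r0_def)
    then have "A \<le> C * ln (real r)" using C by (simp add: field_simps)
    then have each: "real (d s) \<le> C * ln (real r)" if "s \<in> {1..r}" for s
    proof (cases "r1 \<le> s")
      case True
      then have "real (d s) \<le> C * ln (real s)" by (rule r1(2))
      also have "\<dots> \<le> C * ln (real r)" using that C by (intro mult_left_mono) auto
      finally show ?thesis .
    next
      case False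
      then have "real (d s) \<le> A" unfolding A_def by (intro member_le_sum) auto
      with \<open>A \<le> C * ln (real r)\<close> show ?thesis by simp
    qed
    have "real (\<Sum>s=1..r. d s) \<le> real (card {1..r}) * (C * ln (real r))"
      unfolding of_nat_sum by (rule sum_bounded_above) (rule each)
    moreover have "of_nat (card {1..r}) * 1 \<le> (\<Sum>s=1..r. d s)"
      by (rule sum_bounded_below) (use pos in auto)
    ultimately show ?thesis
      using pos[of r] r1(2)[of r] r r1(1) by (auto simp: r0_def mult_ac)
  qed
  then show ?thesis by blast
qed

theorem mainTheorem10:
  fixes \<mu> :: real and M :: "nat list set measure"
  assumes "\<mu> < 0" and "is_nu_measure \<mu> M"
  shows "\<exists>C1 C2. C1 > 0 \<and> C2 > 0 \<and>
    (AE T in M. \<exists>r0::nat. \<forall>r\<ge>r0.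
        1 \<le> card (D r T) \<and> real (card (D r T)) \<le> C1 * ln (real r) \<and>
        r \<le> Bsize r T \<and> real (Bsize r T) \<le> C2 * real r * ln (real r))"
proof -
  obtain C where C: "0 < C"
    and upper: "AE T in M. eventually (\<lambda>r. real (card (D r T)) \<le> C * ln (real r)) sequentially"
    using AE_eventually_card_D_le_log[OF assms] by blast
  have "AE T in M. \<exists>r0::nat. \<forall>r\<ge>r0.
        1 \<le> card (D r T) \<and> real (card (D r T)) \<le> C * ln (real r) \<and>
        r \<le> Bsize r T \<and> real (Bsize r T) \<le> C * real r * ln (real r)"
    using upper AE_ball_tree_in_trees_of_height[OF assms]
  proof eventually_elim
    case (elim T)
    have "1 \<le> card (D r T)" if "1 \<le> r" for r
      using card_D_trees_of_height(1)[OF elim(2)[rule_format, OF that]] by simp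
    then show ?case
      unfolding Bsize_def using log_bound_partial_sums[OF C _ elim(1)] by blast
  qed
  with C show ?thesis by blast
qed

end
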